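(* Let $\boldsymbol X_1,\boldsymbol X_2,\dots$ be i.i.d. random vectors in $\mathbb R^2$ with distribution $H_0$. For each $n$ let $\boldsymbol T_{0n}\in\mathbb R^2$ and $\boldsymbol C_{0n}$ (a $2\times 2$ symmetric invertible matrix) be location and scatter estimators computed from $\boldsymbol X_1,\dots,\boldsymbol X_n$, such that $\boldsymbol T_{0n}\to\boldsymbol\mu_0\in\mathbb R^2$ and $\boldsymbol C_{0n}\to\boldsymbol\Sigma_0$ almost surely $[H_0]$, where $\boldsymbol\Sigma_0$ is a $2\times2$ positive definite symmetric matrix. Let $$G_0(t)=P_{H_0}\bigl((\boldsymbol X-\boldsymbol\mu_0)^t\boldsymbol\Sigma_0^{-1}(\boldsymbol X-\boldsymbol\mu_0)\le t\bigr),$$ and assume $G_0$ is continuous. Let $D_i=(\boldsymbol X_i-\boldsymbol T_{0n})^t\boldsymbol C_{0n}^{-1}(\boldsymbol X_i-\boldsymbol T_{0n})$, $i=1,\dots,n$, and let $G_n(t)=\frac1n\sum_{i=1}^n I(D_i\le t)$ be their empirical distribution function. Let $G$ be a reference distribution function on $[0,\infty)$ (e.g. $\chi^2_2$), let $\alpha\in(0,1)$ and $\eta=G^{-1}(\alpha)$, and define $$d_n=\sup_{t\ge\eta}\bigl\{G(t)-G_n(t)\bigr\}^{+},\qquad n_0=\lfloor n d_n\rfloor,$$ where $\{a\}^+=\max(a,0)$. If the reference distribution satisfies $$\max_{t\ge\eta}\{G(t)-G_0(t)\}\le 0,$$ then $n_0/n\to 0$ almost surely.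
   Context: This is the consistency property of the bivariate filter: the filter flags the $n_0=\lfloor n d_n\rfloor$ observations with the largest distances $D_i$ as outliers. *)

theory Defs
  imports "HOL-Probability.Probability"
begin

definition mahal :: "real^2 \<Rightarrow> real^2 \<Rightarrow> real^2^2 \<Rightarrow> real" where
  "mahal x m S = (x - m) \<bullet> (matrix_inv S *v (x - m))"

definition emp_cdf :: "nat \<Rightarrow> (nat \<Rightarrow> real) \<Rightarrow> real \<Rightarrow> real" where
  "emp_cdf n D t = real (card {i \<in> {1..n}. D i \<le> t}) / real n"

definition quantile :: "(real \<Rightarrow> real) \<Rightarrow> real \<Rightarrow> real" where
  "quantile G a = Inf {t. a \<le> G t}"

definition pos_part :: "real \<Rightarrow> real" where
  "pos_part a = max a 0"

end

theory Submission
  imports Defs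
begin

text \<open>Beyond \<open>\<eta>\<close> the reference distribution function lies below \<open>G\<^sub>0\<close>, so it suffices to show
  that the empirical distribution function \<open>G\<^sub>n\<close> of the estimated distances is asymptotically
  bounded below by \<open>G\<^sub>0\<close>, uniformly in \<open>t\<close>. Fix \<open>\<epsilon>\<close>. Continuity of \<open>G\<^sub>0\<close> yields a finite grid
  \<open>A\<close> and a gap \<open>\<delta>\<close> such that every \<open>t\<close> with \<open>G\<^sub>0 t > \<epsilon>\<close> lies at least \<open>\<delta>\<close> to the right of
  some \<open>a \<in> A\<close> with \<open>G\<^sub>0 t - \<epsilon>/2 \<le> G\<^sub>0 a\<close>. On a ball of large probability the estimated
  distances are eventually uniformly within \<open>\<delta>\<close> of the true ones, because the quadratic form is
  jointly continuous in the location, the inverse scatter and the point. Hence \<open>G\<^sub>n t\<close> dominates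
  the empirical frequency of \<open>{x in the ball. D x \<le> a}\<close>, which by Hoeffding's inequality and
  Borel--Cantelli eventually exceeds its probability minus \<open>\<epsilon>/4\<close>, simultaneously for the
  finitely many grid points. Thus \<open>d\<^sub>n \<rightarrow> 0\<close> almost surely, and \<open>n\<^sub>0/n\<close> is within \<open>1/n\<close>
  of \<open>d\<^sub>n\<close>.\<close>

section \<open>Matrix inverses and matrix-vector products\<close>

definition inverse2x2 :: "real^2^2 \<Rightarrow> real^2^2" where
  "inverse2x2 A = (\<chi> i j. (if i = 1 then (if j = 1 then A$2$2 else - A$1$2)
                        else (if j = 1 then - A$2$1 else A$1$1)) / det A)"

lemma matrix_mul_inverse2x2:
  fixes A :: "real^2^2"
  assumes "det A \<noteq> 0"
  shows "A ** inverse2x2 A = mat 1"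
  using assms unfolding inverse2x2_def matrix_matrix_mult_def mat_def
  by (simp add: vec_eq_iff forall_2 sum_2, simp add: divide_simps, simp add: det_2 algebra_simps)

lemma matrix_inv_2x2:
  fixes A :: "real^2^2"
  assumes "det A \<noteq> 0"
  shows "matrix_inv A = inverse2x2 A"
proof -
  have right: "A ** inverse2x2 A = mat 1" by (rule matrix_mul_inverse2x2[OF assms])
  hence left: "inverse2x2 A ** A = mat 1" using matrix_left_right_inverse by blast
  have "\<exists>A'. A ** A' = mat 1 \<and> A' ** A = mat 1" using left right by blast
  hence inv: "A ** matrix_inv A = mat 1"
    unfolding matrix_inv_def by (rule someI_ex[THEN conjunct1])
  have "matrix_inv A = (inverse2x2 A ** A) ** matrix_inv A" by (simp add: left)
  also have "\<dots> = inverse2x2 A ** (A ** matrix_inv A)" by (simp add: matrix_mul_assoc)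
  also have "\<dots> = inverse2x2 A" by (simp add: inv)
  finally show ?thesis .
qed

lemma isCont_matrix_inv_2x2:
  fixes S :: "real^2^2"
  assumes "det S \<noteq> 0"
  shows "isCont matrix_inv S"
proof -
  have det_cont: "continuous_on UNIV (\<lambda>A::real^2^2. det A)"
    unfolding det_2 by (intro continuous_intros)
  have "open {A::real^2^2. det A \<noteq> 0}"
    by (rule open_Collect_neq[OF det_cont continuous_on_const])
  hence "\<forall>\<^sub>F A in nhds S. det A \<noteq> 0"
    using assms by (rule eventually_nhds_in_open[where s = "{A. det A \<noteq> 0}", simplified])
  hence eq: "\<forall>\<^sub>F A in nhds S. matrix_inv A = inverse2x2 A"
    by (rule eventually_mono) (rule matrix_inv_2x2)
  have "(det \<longlongrightarrow> det S) (at S)"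
    using det_cont by (simp add: continuous_on_eq_continuous_at isCont_def)
  hence "isCont inverse2x2 S"
    unfolding isCont_def inverse2x2_def
    apply (intro tendsto_vec_lambda tendsto_divide)
    subgoal for i j by (cases "i = 1"; cases "j = 1") (auto intro!: tendsto_intros)
    using assms by auto
  thus ?thesis using isCont_cong[OF eq] by blast
qed

lemma positive_definite_invertible:
  fixes S :: "real^'n^'n"
  assumes "\<And>x. x \<noteq> 0 \<Longrightarrow> x \<bullet> (S *v x) > 0"
  shows "invertible S"
proof -
  have "x = 0" if "S *v x = 0" for x
    using assms[of x] that by (cases "x = 0") simp_all
  hence "\<forall>x. S *v x = 0 \<longrightarrow> x = 0" by blast
  thus ?thesis
    unfolding invertible_left_inverse matrix_left_invertible_ker .
qed

lemma continuous_on_matrix_vector_mult [continuous_intros]: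
  fixes f :: "'a::topological_space \<Rightarrow> real^'n^'m" and g :: "'a \<Rightarrow> real^'n"
  assumes "continuous_on S f" "continuous_on S g"
  shows "continuous_on S (\<lambda>x. f x *v g x)"
  unfolding matrix_vector_mult_def
  by (intro continuous_on_vec_lambda continuous_intros continuous_on_component assms)

section \<open>Uniform approximation and finite grids\<close>

lemma eventually_uniformly_close_on_compact:
  fixes q :: "'c::topological_space \<Rightarrow> 'b::topological_space \<Rightarrow> 'd::metric_space"
  assumes q: "continuous_on UNIV (case_prod q)" and K: "compact K"
    and p: "(p \<longlongrightarrow> p0) F" and e: "e > 0"
  shows "\<forall>\<^sub>F n in F. \<forall>x\<in>K. dist (q (p n) x) (q p0 x) \<le> e"
proof -
  have "continuous_on (UNIV \<times> K) (case_prod q)"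
    using q by (rule continuous_on_subset) simp
  then obtain P where "p0 \<in> P" "open P" and close: "\<forall>y\<in>P. \<forall>x\<in>K. dist (q y x) (q p0 x) \<le> e"
    by (rule continuous_on_prod_compactE[OF _ K UNIV_I e]) auto
  hence "\<forall>\<^sub>F n in F. p n \<in> P" using p by (intro topological_tendstoD)
  thus ?thesis by (rule eventually_mono) (use close in blast)
qed

lemma uniformly_continuous_finite_left_grid:
  fixes G :: "real \<Rightarrow> real"
  assumes cont: "continuous_on {L-1..U} G" and e: "e > 0"
  obtains A \<delta> where "finite A" "\<delta> > 0" "\<And>t. t \<in> {L..U} \<Longrightarrow> \<exists>a\<in>A. a + \<delta> \<le> t \<and> G t - e < G a"
proof -
  have "uniformly_continuous_on {L-1..U} G"
    using cont by (rule compact_uniformly_continuous) simp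
  then obtain d where "d > 0" and
    d: "\<And>x y. x \<in> {L-1..U} \<Longrightarrow> y \<in> {L-1..U} \<Longrightarrow> dist y x < d \<Longrightarrow> dist (G y) (G x) < e"
    unfolding uniformly_continuous_on_def using e by metis
  define \<delta> where "\<delta> = min d 1 / 3"
  have \<delta>: "\<delta> > 0" "3 * \<delta> \<le> d" "3 * \<delta> \<le> 1" using \<open>d > 0\<close> by (auto simp: \<delta>_def)
  obtain S where "S \<subseteq> {L..U}" "finite S" and S: "{L..U} \<subseteq> (\<Union>s\<in>S. ball s \<delta>)"
    by (rule compactE_image[of "{L..U}" "{L..U}" "\<lambda>s. ball s \<delta>"]) (use \<delta> in auto)
  \<comment> \<open>Each grid point lies between \<open>2\<delta>\<close> and \<open>3\<delta>\<close> to the left of the points it controls.\<close>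
  show thesis
  proof (rule that[of "(\<lambda>s. s - 2 * \<delta>) ` S" \<delta>])
    show "finite ((\<lambda>s. s - 2 * \<delta>) ` S)" using \<open>finite S\<close> by simp
    show "\<delta> > 0" by (rule \<delta>)
    fix t assume t: "t \<in> {L..U}"
    then obtain s where "s \<in> S" "dist s t < \<delta>" using S by force
    hence a: "s - 2 * \<delta> + \<delta> \<le> t" "s - 2 * \<delta> \<in> {L-1..U}" "dist (s - 2 * \<delta>) t < d"
      using \<delta> t by (auto simp: dist_real_def)
    hence "dist (G (s - 2 * \<delta>)) (G t) < e" using d[of t "s - 2 * \<delta>"] t by simp
    hence "G t - e < G (s - 2 * \<delta>)" unfolding dist_real_def by (simp only: abs_less_iff) linarith
    thus "\<exists>a\<in>(\<lambda>s. s - 2 * \<delta>) ` S. a + \<delta> \<le> t \<and> G t - e < G a" using a \<open>s \<in> S\<close> by blast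
  qed
qed

lemma continuous_cdf_finite_grid:
  fixes G :: "real \<Rightarrow> real"
  assumes mono: "mono G" and cont: "continuous_on UNIV G"
    and bot: "(G \<longlongrightarrow> 0) at_bot" and top: "(G \<longlongrightarrow> 1) at_top" and e: "e > 0"
  obtains A \<delta> where "finite A" "\<delta> > 0" "\<And>t. G t \<le> e \<or> (\<exists>a\<in>A. a + \<delta> \<le> t \<and> G t - e \<le> G a)"
proof -
  have le1: "G t \<le> 1" for t
  proof (rule tendsto_le[OF trivial_limit_at_top_linorder top tendsto_const])
    show "\<forall>\<^sub>F x in at_top. G t \<le> G x"
      using eventually_ge_at_top[of t] by (rule eventually_mono) (rule monoD[OF mono])
  qed
  obtain L where L: "G L \<le> e"
    using order_tendstoD(2)[OF bot e] by (meson eventually_at_bot_linorder order_refl less_imp_le)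
  obtain U where U: "1 - e/2 < G U" "L \<le> U"
  proof -
    obtain N where "\<And>t. t \<ge> N \<Longrightarrow> 1 - e/2 < G t"
      using order_tendstoD(1)[OF top, of "1 - e/2"] e by (auto simp: eventually_at_top_linorder)
    thus thesis by (intro that[of "max N L"]) auto
  qed
  obtain A \<delta> where "finite A" "\<delta> > 0"
    and grid: "\<And>t. t \<in> {L..U} \<Longrightarrow> \<exists>a\<in>A. a + \<delta> \<le> t \<and> G t - e/2 < G a"
    by (rule uniformly_continuous_finite_left_grid[of L U G "e/2"])
       (use cont e in \<open>auto intro: continuous_on_subset\<close>)
  show thesis
  proof (rule that[OF \<open>finite A\<close> \<open>\<delta> > 0\<close>])
    fix t
    consider "t < L" | "t \<in> {L..U}" | "U < t" by force
    thus "G t \<le> e \<or> (\<exists>a\<in>A. a + \<delta> \<le> t \<and> G t - e \<le> G a)"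
    proof cases
      case 1 thus ?thesis using L monoD[OF mono, of t L] by simp
    next
      case 2 thus ?thesis using grid[of t] e by force
    next
      case 3
      then obtain a where "a \<in> A" "a + \<delta> \<le> t" "G U - e/2 < G a"
        using grid[of U] U by force
      thus ?thesis using le1[of t] U(1) by force
    qed
  qed
qed

section \<open>Distribution functions of real-valued maps\<close>

lemma borel_measurable_if_sets_eq_borel:
  assumes "sets H = sets borel" "g \<in> borel_measurable borel"
  shows "g \<in> borel_measurable H"
  by (subst measurable_cong_sets[OF assms(1) refl]) (rule assms(2))

lemma cdf_distr_eq_measure:
  fixes H :: "'b::topological_space measure" and g :: "'b \<Rightarrow> real"
  assumes H: "sets H = sets borel" and g: "g \<in> borel_measurable borel"
  shows "cdf (distr H borel g) t = measure H {x. g x \<le> t}"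
proof -
  have "cdf (distr H borel g) t = measure H (g -` {..t} \<inter> space H)"
    unfolding cdf_def by (rule measure_distr) (simp_all add: borel_measurable_if_sets_eq_borel[OF H g])
  also have "g -` {..t} \<inter> space H = {x. g x \<le> t}"
    using sets_eq_imp_space_eq[OF H] by auto
  finally show ?thesis .
qed

lemma real_distribution_distr_borel:
  fixes H :: "'b::topological_space measure" and g :: "'b \<Rightarrow> real"
  assumes "prob_space H" "sets H = sets borel" "g \<in> borel_measurable borel"
  shows "real_distribution (distr H borel g)"
  using borel_measurable_if_sets_eq_borel[OF assms(2,3)]
  by (rule prob_space.real_distribution_distr[OF assms(1)])

lemma continuous_distribution_finite_grid:
  fixes H :: "'b::topological_space measure" and g :: "'b \<Rightarrow> real"
  assumes H: "prob_space H" "sets H = sets borel" and g: "g \<in> borel_measurable borel"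
    and cont: "continuous_on UNIV (\<lambda>t. measure H {x. g x \<le> t})" and e: "e > 0"
  obtains A \<delta> where "finite A" "\<delta> > 0"
    "\<And>t. measure H {x. g x \<le> t} \<le> e \<or>
         (\<exists>a\<in>A. a + \<delta> \<le> t \<and> measure H {x. g x \<le> t} - e \<le> measure H {x. g x \<le> a})"
proof -
  interpret G: real_distribution "distr H borel g"
    by (rule real_distribution_distr_borel[OF H g])
  let ?G = "cdf (distr H borel g)"
  have G_eq: "?G t = measure H {x. g x \<le> t}" for t
    by (rule cdf_distr_eq_measure[OF H(2) g])
  show thesis
  proof (rule continuous_cdf_finite_grid[of ?G e])
    show "mono ?G" by (intro monoI G.cdf_nondecreasing)
    show "continuous_on UNIV ?G" using cont by (simp add: G_eq)
    fix A \<delta> assume grid: "finite A" "\<delta> > 0"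
      "\<And>t. ?G t \<le> e \<or> (\<exists>a\<in>A. a + \<delta> \<le> t \<and> ?G t - e \<le> ?G a)"
    show thesis by (rule that[OF grid(1,2)]) (use grid(3) in \<open>simp only: G_eq\<close>)
  qed (rule G.cdf_lim_at_bot, rule G.cdf_lim_at_top_prob, rule e)
qed

lemma measure_le_measure_Int_cball:
  fixes H :: "'b::real_normed_vector measure"
  assumes H: "prob_space H" "sets H = sets borel" and e: "e > 0"
  obtains R where "\<And>S. S \<in> sets borel \<Longrightarrow> measure H S \<le> measure H (S \<inter> cball 0 R) + e"
proof -
  interpret H: prob_space H by (rule H(1))
  interpret N: real_distribution "distr H borel norm"
    by (rule real_distribution_distr_borel[OF H]) simp
  from order_tendstoD(1)[OF N.cdf_lim_at_top_prob, of "1 - e"] e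
  obtain R where "1 - e < cdf (distr H borel norm) R"
    unfolding eventually_at_top_linorder by auto
  moreover have "{x::'b. norm x \<le> R} = cball 0 R" by auto
  ultimately have R: "1 - e < measure H (cball 0 R)"
    using cdf_distr_eq_measure[OF H(2), of norm R] by simp
  have C: "cball 0 R \<in> sets H" using H(2) by simp
  show thesis
  proof (rule that[of R])
    fix S :: "'b set" assume "S \<in> sets borel"
    hence S: "S \<in> sets H" using H(2) by simp
    have "measure H S = measure H (S \<inter> cball 0 R) + measure H (S - cball 0 R)"
      using H.finite_measure_Diff'[OF S C] by simp
    also have "measure H (S - cball 0 R) \<le> measure H (space H - cball 0 R)"
      using S C by (intro H.finite_measure_mono) (auto dest: sets.sets_into_space)
    also have "\<dots> = 1 - measure H (cball 0 R)" by (rule H.prob_compl[OF C])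
    finally show "measure H S \<le> measure H (S \<inter> cball 0 R) + e" using R by linarith
  qed
qed

section \<open>Empirical frequencies and distribution functions\<close>

lemma (in prob_space) prob_frequency_le:
  fixes X :: "nat \<Rightarrow> 'a \<Rightarrow> 'b::topological_space"
  assumes X_rv: "\<And>i. i \<ge> 1 \<Longrightarrow> random_variable borel (X i)"
    and X_indep: "indep_vars (\<lambda>_. borel) X {1..}"
    and X_dist: "\<And>i. i \<ge> 1 \<Longrightarrow> distr M borel (X i) = H"
    and E: "E \<in> sets borel" and e: "e > 0"
  shows "prob {\<omega>\<in>space M. real (card {i\<in>{1..n}. X i \<omega> \<in> E}) / real n \<le> measure H E - e}
           \<le> exp (-2 * e\<^sup>2) ^ n"
proof (cases "n = 0")
  case True thus ?thesis by simp
next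
  case False
  define Z where "Z i \<omega> = (indicator E (X i \<omega>) :: real)" for i \<omega>
  have Z_rv: "random_variable borel (Z i)" if "i \<ge> 1" for i
    unfolding Z_def using X_rv[OF that] E by measurable
  have Z_distr: "distr M borel (Z i) = distr H borel (indicator E)" if "i \<ge> 1" for i
    unfolding Z_def X_dist[OF that, symmetric]
    by (subst distr_distr) (use X_rv[OF that] E in \<open>auto simp: comp_def\<close>)
  have "expectation (Z 1) = integral\<^sup>L H (indicator E)"
    unfolding Z_def X_dist[of 1, symmetric, OF order_refl]
    by (subst integral_distr) (use X_rv[of 1] E in auto)
  also have "\<dots> = measure H E"
  proof -
    have "space H = UNIV" using X_dist[of 1] by (metis order_refl space_borel space_distr)
    thus ?thesis by simp
  qed
  finally have mean: "expectation (Z 1) = measure H E" .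
  interpret Z: Hoeffding_ineq_iid M "{1..n}" Z "Z 1" 0 1 "expectation (Z 1)"
  proof unfold_locales
    show "indep_vars (\<lambda>_. borel) Z {1..n}"
      unfolding Z_def
      by (rule indep_vars_compose2[OF indep_vars_subset[OF X_indep]]) (use E in auto)
    show "distr M borel (Z i) = distr M borel (Z 1)" if "i \<in> {1..n}" for i
      using that by (simp add: Z_distr)
    show "AE x in M. Z 1 x \<in> {0..1}" by (simp add: Z_def)
  qed (simp_all add: Z_rv)
  have count: "(\<Sum>i\<in>{1..n}. Z i \<omega>) = real (card {i\<in>{1..n}. X i \<omega> \<in> E})" for \<omega>
    unfolding Z_def indicator_def by (simp add: sum.If_cases Int_def conj_ac)
  have "prob {\<omega>\<in>space M. (\<Sum>i\<in>{1..n}. Z i \<omega>) / real (card {1..n}) \<le> expectation (Z 1) - e}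
          \<le> exp (-2 * real (card {1..n}) * e\<^sup>2 / (1 - 0)\<^sup>2)"
    by (rule Z.Hoeffding_ineq_le') (use e False in auto)
  thus ?thesis
    unfolding count mean by (simp add: exp_of_nat_mult[symmetric] mult_ac)
qed

lemma (in prob_space) AE_eventually_frequency_gt:
  fixes X :: "nat \<Rightarrow> 'a \<Rightarrow> 'b::topological_space"
  assumes X_rv: "\<And>i. i \<ge> 1 \<Longrightarrow> random_variable borel (X i)"
    and X_indep: "indep_vars (\<lambda>_. borel) X {1..}"
    and X_dist: "\<And>i. i \<ge> 1 \<Longrightarrow> distr M borel (X i) = H"
    and E: "E \<in> sets borel" and e: "e > 0"
  shows "AE \<omega> in M. \<forall>\<^sub>F n in sequentially.
           measure H E - e < real (card {i\<in>{1..n}. X i \<omega> \<in> E}) / real n"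
proof -
  define B where
    "B n = {\<omega>\<in>space M. real (card {i\<in>{1..n}. X i \<omega> \<in> E}) / real n \<le> measure H E - e}" for n
  have B_events: "B n \<in> events" for n
  proof -
    have "(\<lambda>\<omega>. \<Sum>i\<in>{1..n}. indicator E (X i \<omega>) :: real) \<in> borel_measurable M"
      by (rule borel_measurable_sum, rule measurable_compose[OF X_rv borel_measurable_indicator[OF E]]) simp
    also have "(\<lambda>\<omega>. \<Sum>i\<in>{1..n}. indicator E (X i \<omega>) :: real) = (\<lambda>\<omega>. real (card {i\<in>{1..n}. X i \<omega> \<in> E}))"
      unfolding indicator_def by (simp add: sum.If_cases Int_def conj_ac)
    finally have [measurable]: "(\<lambda>\<omega>. real (card {i\<in>{1..n}. X i \<omega> \<in> E})) \<in> borel_measurable M" .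
    show ?thesis unfolding B_def by measurable
  qed
  have "summable (\<lambda>n. exp (-2 * e\<^sup>2) ^ n)"
    using e by (intro summable_geometric) simp
  moreover have "norm (prob (B n)) \<le> exp (-2 * e\<^sup>2) ^ n" for n
    unfolding B_def using prob_frequency_le[OF X_rv X_indep X_dist E e] by simp
  ultimately have "summable (\<lambda>n. prob (B n))"
    by (rule summable_comparison_test'[where N = 0])
  hence "AE \<omega> in M. \<forall>\<^sub>F n in sequentially. \<omega> \<in> space M - B n"
    by (intro borel_cantelli_AE1 B_events) (simp_all add: emeasure_eq_measure)
  thus ?thesis
  proof (rule eventually_mono)
    fix \<omega> assume "\<forall>\<^sub>F n in sequentially. \<omega> \<in> space M - B n"
    thus "\<forall>\<^sub>F n in sequentially. measure H E - e < real (card {i\<in>{1..n}. X i \<omega> \<in> E}) / real n"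
      by (rule eventually_mono) (auto simp: B_def not_le)
  qed
qed

lemma emp_cdf_nonneg: "0 \<le> emp_cdf n D t"
  by (simp add: emp_cdf_def)

lemma emp_cdf_ge_by_grid:
  fixes G :: "real \<Rightarrow> real" and f D :: "'b \<Rightarrow> real"
  assumes grid: "\<And>t. G t \<le> e/2 \<or> (\<exists>a\<in>A. a + \<delta> \<le> t \<and> G t - e/2 \<le> G a)"
    and G_le: "\<And>a. G a \<le> P a + e/4"
    and freq: "\<And>a. a \<in> A \<Longrightarrow> P a - e/4 < real (card {i\<in>{1..n}. Y i \<in> {x. f x \<le> a} \<inter> K}) / real n"
    and close: "\<forall>x\<in>K. \<bar>D x - f x\<bar> \<le> \<delta>" and e: "e > 0"
  shows "G t - emp_cdf n (\<lambda>i. D (Y i)) t \<le> e"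
proof (cases "G t \<le> e/2")
  case True thus ?thesis using emp_cdf_nonneg[of n "\<lambda>i. D (Y i)" t] e by linarith
next
  case False
  then obtain a where a: "a \<in> A" "a + \<delta> \<le> t" "G t - e/2 \<le> G a" using grid[of t] by blast
  have "{i\<in>{1..n}. Y i \<in> {x. f x \<le> a} \<inter> K} \<subseteq> {i\<in>{1..n}. D (Y i) \<le> t}"
    using close a(2) by force
  hence "card {i\<in>{1..n}. Y i \<in> {x. f x \<le> a} \<inter> K} \<le> card {i\<in>{1..n}. D (Y i) \<le> t}"
    by (rule card_mono[rotated]) simp
  hence "real (card {i\<in>{1..n}. Y i \<in> {x. f x \<le> a} \<inter> K}) / real n \<le> emp_cdf n (\<lambda>i. D (Y i)) t"
    unfolding emp_cdf_def by (intro divide_right_mono) simp_all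
  thus ?thesis using freq[OF a(1)] G_le[of a] a(3) by linarith
qed

lemma (in prob_space) AE_eventually_empirical_cdf_ge:
  fixes X :: "nat \<Rightarrow> 'a \<Rightarrow> 'b::{real_normed_vector, heine_borel}"
    and q :: "'c::topological_space \<Rightarrow> 'b \<Rightarrow> real"
  assumes X_rv: "\<And>i. i \<ge> 1 \<Longrightarrow> random_variable borel (X i)"
    and X_indep: "indep_vars (\<lambda>_. borel) X {1..}"
    and X_dist: "\<And>i. i \<ge> 1 \<Longrightarrow> distr M borel (X i) = H"
    and q: "continuous_on UNIV (case_prod q)"
    and G_cont: "continuous_on UNIV (\<lambda>t. measure H {x. q p0 x \<le> t})"
    and p: "AE \<omega> in M. (\<lambda>n. p n \<omega>) \<longlonglongrightarrow> p0"
    and e: "e > 0"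
  shows "AE \<omega> in M. \<forall>\<^sub>F n in sequentially. \<forall>t.
           measure H {x. q p0 x \<le> t} - emp_cdf n (\<lambda>i. q (p n \<omega>) (X i \<omega>)) t \<le> e"
proof -
  have H: "prob_space H" "sets H = sets borel"
    using prob_space_distr[OF X_rv[of 1]] X_dist[of 1] by auto
  have "continuous_on UNIV (\<lambda>x. case_prod q (p0, x))"
    by (rule continuous_on_compose2[OF q]) (auto intro!: continuous_intros)
  hence q0[measurable]: "q p0 \<in> borel_measurable borel"
    by (intro borel_measurable_continuous_onI) simp
  obtain A \<delta> where "finite A" "\<delta> > 0" and grid: "\<And>t. measure H {x. q p0 x \<le> t} \<le> e/2 \<or>
      (\<exists>a\<in>A. a + \<delta> \<le> t \<and> measure H {x. q p0 x \<le> t} - e/2 \<le> measure H {x. q p0 x \<le> a})"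
    using continuous_distribution_finite_grid[OF H q0 G_cont, of "e/2"] e by auto
  obtain R where tight: "\<And>S. S \<in> sets borel \<Longrightarrow> measure H S \<le> measure H (S \<inter> cball 0 R) + e/4"
    using measure_le_measure_Int_cball[OF H, of "e/4"] e by auto
  have G_le: "measure H {x. q p0 x \<le> a} \<le> measure H ({x. q p0 x \<le> a} \<inter> cball 0 R) + e/4" for a
    by (rule tight) measurable
  have "AE \<omega> in M. \<forall>a\<in>A. \<forall>\<^sub>F n in sequentially. measure H ({x. q p0 x \<le> a} \<inter> cball 0 R) - e/4
          < real (card {i\<in>{1..n}. X i \<omega> \<in> {x. q p0 x \<le> a} \<inter> cball 0 R}) / real n"
    using \<open>finite A\<close> e by (intro AE_finite_allI AE_eventually_frequency_gt[OF X_rv X_indep X_dist]) simp_all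
  thus ?thesis
    using p
  proof eventually_elim
    case (elim \<omega>)
    have "\<forall>\<^sub>F n in sequentially. \<forall>x\<in>cball 0 R. dist (q (p n \<omega>) x) (q p0 x) \<le> \<delta>"
      by (rule eventually_uniformly_close_on_compact[OF q compact_cball elim(2) \<open>\<delta> > 0\<close>])
    moreover have "\<forall>\<^sub>F n in sequentially. \<forall>a\<in>A. measure H ({x. q p0 x \<le> a} \<inter> cball 0 R) - e/4
        < real (card {i\<in>{1..n}. X i \<omega> \<in> {x. q p0 x \<le> a} \<inter> cball 0 R}) / real n"
      using elim(1) \<open>finite A\<close> by (simp add: eventually_ball_finite)
    ultimately show ?case
    proof eventually_elim
      case (elim n)
      show ?case
        using elim by (intro allI emp_cdf_ge_by_grid[OF grid G_le _ _ e]) (auto simp: dist_real_def)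
    qed
  qed
qed

lemma (in prob_space) AE_empirical_cdf_lower_uniform:
  fixes X :: "nat \<Rightarrow> 'a \<Rightarrow> 'b::{real_normed_vector, heine_borel}"
    and q :: "'c::topological_space \<Rightarrow> 'b \<Rightarrow> real"
  assumes X_rv: "\<And>i. i \<ge> 1 \<Longrightarrow> random_variable borel (X i)"
    and X_indep: "indep_vars (\<lambda>_. borel) X {1..}"
    and X_dist: "\<And>i. i \<ge> 1 \<Longrightarrow> distr M borel (X i) = H"
    and q: "continuous_on UNIV (case_prod q)"
    and G_cont: "continuous_on UNIV (\<lambda>t. measure H {x. q p0 x \<le> t})"
    and p: "AE \<omega> in M. (\<lambda>n. p n \<omega>) \<longlonglongrightarrow> p0"
  shows "AE \<omega> in M. \<forall>e>0. \<forall>\<^sub>F n in sequentially. \<forall>t.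
           measure H {x. q p0 x \<le> t} - emp_cdf n (\<lambda>i. q (p n \<omega>) (X i \<omega>)) t \<le> e"
proof -
  have "AE \<omega> in M. \<forall>k. \<forall>\<^sub>F n in sequentially. \<forall>t.
      measure H {x. q p0 x \<le> t} - emp_cdf n (\<lambda>i. q (p n \<omega>) (X i \<omega>)) t \<le> 1 / real (Suc k)"
    unfolding AE_all_countable
    by (intro allI AE_eventually_empirical_cdf_ge[OF X_rv X_indep X_dist q G_cont p]) auto
  thus ?thesis
  proof (rule eventually_mono, intro allI impI)
    fix \<omega> and e :: real
    assume bound: "\<forall>k. \<forall>\<^sub>F n in sequentially. \<forall>t.
      measure H {x. q p0 x \<le> t} - emp_cdf n (\<lambda>i. q (p n \<omega>) (X i \<omega>)) t \<le> 1 / real (Suc k)"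
      and "e > 0"
    obtain k where k: "1 / real (Suc k) < e"
      using reals_Archimedean[OF \<open>e > 0\<close>] by (auto simp: inverse_eq_divide)
    show "\<forall>\<^sub>F n in sequentially. \<forall>t.
      measure H {x. q p0 x \<le> t} - emp_cdf n (\<lambda>i. q (p n \<omega>) (X i \<omega>)) t \<le> e"
      using bound[rule_format, of k] by (rule eventually_mono) (use k in \<open>smt (verit)\<close>)
  qed
qed

section \<open>The trimming proportion\<close>

lemma SUP_pos_part_diff_tendsto_0:
  fixes F G :: "'b \<Rightarrow> real" and Fn :: "nat \<Rightarrow> 'b \<Rightarrow> real"
  assumes "S \<noteq> {}" and dominated: "\<And>t. t \<in> S \<Longrightarrow> F t \<le> G t"
    and bdd: "\<And>n. bdd_above ((\<lambda>t. F t - Fn n t) ` S)"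
    and lower: "\<And>e. e > 0 \<Longrightarrow> \<forall>\<^sub>F n in sequentially. \<forall>t. G t - Fn n t \<le> e"
  shows "(\<lambda>n. SUP t\<in>S. pos_part (F t - Fn n t)) \<longlonglongrightarrow> 0"
proof (rule order_tendstoI)
  fix b :: real assume "b < 0"
  obtain t where "t \<in> S" using \<open>S \<noteq> {}\<close> by blast
  have "bdd_above ((\<lambda>t. pos_part (F t - Fn n t)) ` S)" for n
  proof -
    obtain B where "\<forall>t\<in>S. F t - Fn n t \<le> B" using bdd[of n] by (auto simp: bdd_above_def)
    thus ?thesis by (intro bdd_aboveI2[of _ _ "max B 0"]) (auto simp: pos_part_def)
  qed
  hence "0 \<le> (SUP t\<in>S. pos_part (F t - Fn n t))" for n
    using \<open>t \<in> S\<close> by (intro cSUP_upper2[of _ _ t]) (auto simp: pos_part_def)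
  thus "\<forall>\<^sub>F n in sequentially. b < (SUP t\<in>S. pos_part (F t - Fn n t))"
    using \<open>b < 0\<close> by (intro always_eventually allI) (rule less_le_trans)
next
  fix b :: real assume "b > 0"
  hence "\<forall>\<^sub>F n in sequentially. \<forall>t. G t - Fn n t \<le> b/2" by (intro lower) simp
  thus "\<forall>\<^sub>F n in sequentially. (SUP t\<in>S. pos_part (F t - Fn n t)) < b"
  proof (rule eventually_mono)
    fix n assume small: "\<forall>t. G t - Fn n t \<le> b/2"
    have "pos_part (F t - Fn n t) \<le> b/2" if "t \<in> S" for t
    proof -
      have "F t - Fn n t \<le> b/2" using dominated[OF that] small[rule_format, of t] by linarith
      thus ?thesis using \<open>b > 0\<close> by (simp add: pos_part_def max_def)
    qed
    hence "(SUP t\<in>S. pos_part (F t - Fn n t)) \<le> b/2"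
      using \<open>S \<noteq> {}\<close> by (intro cSUP_least)
    thus "(SUP t\<in>S. pos_part (F t - Fn n t)) < b" using \<open>b > 0\<close> by linarith
  qed
qed

lemma floor_mult_divide_tendsto:
  fixes d :: "nat \<Rightarrow> real"
  assumes "d \<longlonglongrightarrow> l"
  shows "(\<lambda>n. real_of_int \<lfloor>real n * d n\<rfloor> / real n) \<longlonglongrightarrow> l"
proof (rule tendsto_sandwich[of "\<lambda>n. d n - 1 / real n" _ _ d])
  show "\<forall>\<^sub>F n in sequentially. d n - 1 / real n \<le> real_of_int \<lfloor>real n * d n\<rfloor> / real n"
    using eventually_gt_at_top[of 0]
  proof (rule eventually_mono)
    fix n :: nat assume "n > 0"
    have "real n * d n - 1 \<le> real_of_int \<lfloor>real n * d n\<rfloor>"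
      using floor_correct[of "real n * d n"] by simp
    hence "(real n * d n - 1) / real n \<le> real_of_int \<lfloor>real n * d n\<rfloor> / real n"
      by (rule divide_right_mono) simp
    thus "d n - 1 / real n \<le> real_of_int \<lfloor>real n * d n\<rfloor> / real n"
      using \<open>n > 0\<close> by (simp add: diff_divide_distrib)
  qed
  show "\<forall>\<^sub>F n in sequentially. real_of_int \<lfloor>real n * d n\<rfloor> / real n \<le> d n"
    using eventually_gt_at_top[of 0] by (rule eventually_mono) (simp add: field_simps)
  show "(\<lambda>n. d n - 1 / real n) \<longlonglongrightarrow> l"
    using tendsto_diff[OF assms lim_const_over_n[of 1]] by simp
qed (rule assms)

theorem proposition2:
  fixes M :: "'a measure"
    and H0 :: "(real^2) measure"
    and X :: "nat \<Rightarrow> 'a \<Rightarrow> real^2"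
    and T :: "nat \<Rightarrow> 'a \<Rightarrow> real^2"
    and C :: "nat \<Rightarrow> 'a \<Rightarrow> real^2^2"
    and \<mu>0 :: "real^2"
    and \<Sigma>0 :: "real^2^2"
    and Q :: "real measure"
    and \<alpha> :: real
  assumes M: "prob_space M"
    and X_rv: "\<And>i. i \<ge> 1 \<Longrightarrow> X i \<in> borel_measurable M"
    and X_indep: "prob_space.indep_vars M (\<lambda>_. borel) X {1..}"
    and X_dist: "\<And>i. i \<ge> 1 \<Longrightarrow> distr M borel (X i) = H0"
    and T_meas: "\<And>n. T n \<in> borel_measurable M"
    and C_meas: "\<And>n. C n \<in> borel_measurable M"
    and T_stat: "\<And>n \<omega> \<omega>'. \<omega> \<in> space M \<Longrightarrow> \<omega>' \<in> space M \<Longrightarrow>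
                   (\<forall>i\<in>{1..n}. X i \<omega> = X i \<omega>') \<Longrightarrow> T n \<omega> = T n \<omega>'"
    and C_stat: "\<And>n \<omega> \<omega>'. \<omega> \<in> space M \<Longrightarrow> \<omega>' \<in> space M \<Longrightarrow>
                   (\<forall>i\<in>{1..n}. X i \<omega> = X i \<omega>') \<Longrightarrow> C n \<omega> = C n \<omega>'"
    and C_sym: "\<And>n \<omega>. \<omega> \<in> space M \<Longrightarrow> transpose (C n \<omega>) = C n \<omega>"
    and C_inv: "\<And>n \<omega>. \<omega> \<in> space M \<Longrightarrow> invertible (C n \<omega>)"
    and T_conv: "AE \<omega> in M. (\<lambda>n. T n \<omega>) \<longlonglongrightarrow> \<mu>0"
    and C_conv: "AE \<omega> in M. (\<lambda>n. C n \<omega>) \<longlonglongrightarrow> \<Sigma>0"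
    and \<Sigma>0_sym: "transpose \<Sigma>0 = \<Sigma>0"
    and \<Sigma>0_pd: "\<And>x. x \<noteq> 0 \<Longrightarrow> x \<bullet> (\<Sigma>0 *v x) > 0"
    and G0_cont: "continuous_on UNIV (\<lambda>t. measure H0 {x. mahal x \<mu>0 \<Sigma>0 \<le> t})"
    and Q: "prob_space Q" "sets Q = sets borel" "measure Q {..<0} = 0"
    and \<alpha>: "0 < \<alpha>" "\<alpha> < 1"
    and ref: "\<forall>t \<ge> quantile (cdf Q) \<alpha>.
                cdf Q t - measure H0 {x. mahal x \<mu>0 \<Sigma>0 \<le> t} \<le> 0"
  shows "AE \<omega> in M.
           (\<lambda>n. real_of_int
                   \<lfloor>real n * (SUP t\<in>{quantile (cdf Q) \<alpha>..}.
                       pos_part (cdf Q t - emp_cdf n (\<lambda>i. mahal (X i \<omega>) (T n \<omega>) (C n \<omega>)) t))\<rfloor>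
                 / real n) \<longlonglongrightarrow> 0"
proof -
  interpret prob_space M by (rule M)
  interpret Q: real_distribution Q
    using Q by (simp add: real_distribution_def real_distribution_axioms_def)
  define q :: "(real^2) \<times> (real^2^2) \<Rightarrow> real^2 \<Rightarrow> real"
    where "q mB x = (x - fst mB) \<bullet> (snd mB *v (x - fst mB))" for mB x
  have q_cont: "continuous_on UNIV (case_prod q)"
    unfolding q_def case_prod_beta by (intro continuous_intros)
  have mahal_q: "mahal x m S = q (m, matrix_inv S) x" for x m S
    by (simp add: mahal_def q_def)
  have inv_cont: "isCont matrix_inv \<Sigma>0"
    using positive_definite_invertible[OF \<Sigma>0_pd] by (intro isCont_matrix_inv_2x2 invertible_det_nz[THEN iffD1])
  have "AE \<omega> in M. (\<lambda>n. (T n \<omega>, matrix_inv (C n \<omega>))) \<longlonglongrightarrow> (\<mu>0, matrix_inv \<Sigma>0)"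
    using T_conv C_conv by eventually_elim (intro tendsto_Pair isCont_tendsto_compose[OF inv_cont])
  from AE_empirical_cdf_lower_uniform[OF X_rv X_indep X_dist q_cont _ this]
  have "AE \<omega> in M. \<forall>e>0. \<forall>\<^sub>F n in sequentially. \<forall>t.
      measure H0 {x. mahal x \<mu>0 \<Sigma>0 \<le> t} - emp_cdf n (\<lambda>i. mahal (X i \<omega>) (T n \<omega>) (C n \<omega>)) t \<le> e"
    using G0_cont unfolding mahal_q by blast
  thus ?thesis
    apply (rule eventually_mono)
    apply (intro floor_mult_divide_tendsto bdd_aboveI2[where M = 1]
        SUP_pos_part_diff_tendsto_0[where G = "\<lambda>t. measure H0 {x. mahal x \<mu>0 \<Sigma>0 \<le> t}"])
    subgoal by simp
    subgoal using ref by simp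
    subgoal for \<omega> n t using Q.cdf_bounded_prob[of t] emp_cdf_nonneg[of n _ t] by (smt (verit))
    subgoal by blast
    done
qed

end
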